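(* Let $S$ be either $\mathcal{PI}^{\ast}_X$ or $\overline{\mathcal{PI}^{\ast}}_X$ and let $a,b\in S$. Then: (1) $a\mathcal{R}b$ iff $\mathrm{dom}(a)=\mathrm{dom}(b)$; (2) $a\mathcal{L}b$ iff $\mathrm{ran}(a)=\mathrm{ran}(b)$; (3) $a\mathcal{D}b$ iff $a\mathcal{J}b$ iff $\mathrm{rank}(a)=\mathrm{rank}(b)$; (4) every ideal of $S$ has the form $J_\xi=\{\alpha\in S:\mathrm{rank}(\alpha)<\xi\}$ for some cardinal $\xi\le |X|^{+}$, where $|X|^{+}$ is the successor cardinal of $|X|$.
   Context: Let $X$ be a set and $X'=\{x':x\in X\}$ a disjoint copy of $X$. Let $P_X$ be the set of all partitions of $X\cup X'$ each of whose blocks is either a singleton (a point) or a generalised line, i.e. a subset meeting both $X$ and $X'$. Write $\alpha=\{A_i\cup B_i'\}_{i\in I}$ for the element whose generalised lines are the $A_i\cup B_i'$ ($A_i,B_i\subseteq X$ nonempty, the $A_i$ pairwise disjoint, the $B_i$ pairwise disjoint), all other elements being points. Set $\mathrm{rank}(\alpha)=|I|$, $\mathrm{dom}(\alpha)$ = the partition $\{A_i\}_{i\in I}$ of $\bigcup_i A_i$, and $\mathrm{ran}(\alpha)$ = the partition $\{B_i'\}_{i\in I}$ of $\bigcup_i B_i'$. Product $\star$: with $X''$ a third copy of $X$, regard $\alpha$ as a partition of $X\cup X''$ and $\beta$ as a partition of $X''\cup X'$ (identifying the bottom copy of $\alpha$ with the top copy of $\beta$ via $X''$), let $\sim$ be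 the equivalence relation on $X\cup X''\cup X'$ generated by the blocks of both; $\alpha\star\beta$ is the partition of $X\cup X'$ in which distinct $u,v$ are in one block iff $u\sim v$ and the $\sim$-class of $u$ contains no singleton block of $\alpha$ or of $\beta$. Product $\circ$: $\alpha\circ\beta$ has as generalised lines exactly the sets $A\cup D'$ with $A\cup B'$ a generalised line of $\alpha$ and $B\cup D'$ a generalised line of $\beta$ (same $B$), all other elements being points. $\mathcal{PI}^{\ast}_X=(P_X,\star)$, $\overline{\mathcal{PI}^{\ast}}_X=(P_X,\circ)$; $\mathcal{R},\mathcal{L},\mathcal{D},\mathcal{J}$ are Green's relations. *)

theory Defs
  imports Main
begin

text \<open>An element alpha of P_X is represented by its set of generalised lines:
  a pair (A,B) stands for the block A \<union> B' (A in the top copy X, B in the bottom copy X').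
  All elements of X \<union> X' not covered by a line are points (singleton blocks).\<close>

type_synonym 'a bip = "('a set \<times> 'a set) set"

definition PX :: "'a set \<Rightarrow> 'a bip set" where
  "PX X = {\<alpha>. (\<forall>(A,B)\<in>\<alpha>. A \<noteq> {} \<and> B \<noteq> {} \<and> A \<subseteq> X \<and> B \<subseteq> X) \<and>
              (\<forall>(A,B)\<in>\<alpha>. \<forall>(C,D)\<in>\<alpha>. (A,B) \<noteq> (C,D) \<longrightarrow> A \<inter> C = {} \<and> B \<inter> D = {})}"

definition rank_of :: "'a bip \<Rightarrow> ('a set \<times> 'a set) rel" where
  "rank_of \<alpha> = card_of \<alpha>"

definition dom_of :: "'a bip \<Rightarrow> 'a set set" where
  "dom_of \<alpha> = {A. \<exists>B. (A,B) \<in> \<alpha>}"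

definition ran_of :: "'a bip \<Rightarrow> 'a set set" where
  "ran_of \<alpha> = {B. \<exists>A. (A,B) \<in> \<alpha>}"

text \<open>Three copies of X: top X (T), middle X'' (M), bottom X' (B).\<close>
datatype 'a lvl = T 'a | M 'a | Bt 'a

definition star_edges :: "'a bip \<Rightarrow> 'a bip \<Rightarrow> ('a lvl \<times> 'a lvl) set" where
  "star_edges \<alpha> \<beta> =
     {(u,v). \<exists>(A,B)\<in>\<alpha>. u \<in> T ` A \<union> M ` B \<and> v \<in> T ` A \<union> M ` B} \<union>
     {(u,v). \<exists>(B,D)\<in>\<beta>. u \<in> M ` B \<union> Bt ` D \<and> v \<in> M ` B \<union> Bt ` D}"

definition star_class :: "'a bip \<Rightarrow> 'a bip \<Rightarrow> 'a lvl \<Rightarrow> 'a lvl set" where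
  "star_class \<alpha> \<beta> u = {v. (u,v) \<in> (star_edges \<alpha> \<beta>)\<^sup>*}"

definition is_point :: "'a set \<Rightarrow> 'a bip \<Rightarrow> 'a bip \<Rightarrow> 'a lvl \<Rightarrow> bool" where
  "is_point X \<alpha> \<beta> w \<longleftrightarrow>
     (\<exists>x\<in>X. w = T x \<and> (\<forall>(A,B)\<in>\<alpha>. x \<notin> A)) \<or>
     (\<exists>x\<in>X. w = M x \<and> ((\<forall>(A,B)\<in>\<alpha>. x \<notin> B) \<or> (\<forall>(B,D)\<in>\<beta>. x \<notin> B))) \<or>
     (\<exists>x\<in>X. w = Bt x \<and> (\<forall>(B,D)\<in>\<beta>. x \<notin> D))"

text \<open>The product star: blocks of alpha*beta through u \<in> X \<union> X' are the traces on
  X \<union> X' of point-free classes; its generalised lines are those blocks meeting both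
  X and X' (all other blocks are singletons).\<close>
definition star :: "'a set \<Rightarrow> 'a bip \<Rightarrow> 'a bip \<Rightarrow> 'a bip" where
  "star X \<alpha> \<beta> =
     {({x\<in>X. T x \<in> C}, {x\<in>X. Bt x \<in> C}) | u C.
        u \<in> T ` X \<union> Bt ` X \<and> C = star_class \<alpha> \<beta> u \<and>
        (\<forall>w\<in>C. \<not> is_point X \<alpha> \<beta> w) \<and>
        {x\<in>X. T x \<in> C} \<noteq> {} \<and> {x\<in>X. Bt x \<in> C} \<noteq> {}}"

definition circ :: "'a bip \<Rightarrow> 'a bip \<Rightarrow> 'a bip" where
  "circ \<alpha> \<beta> = {(A,D). \<exists>B. (A,B) \<in> \<alpha> \<and> (B,D) \<in> \<beta>}"

text \<open>Green's relations of a semigroup (S, m), using S^1.\<close>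
definition greenR :: "'s set \<Rightarrow> ('s \<Rightarrow> 's \<Rightarrow> 's) \<Rightarrow> 's \<Rightarrow> 's \<Rightarrow> bool" where
  "greenR S m a b \<longleftrightarrow> insert a ((\<lambda>s. m a s) ` S) = insert b ((\<lambda>s. m b s) ` S)"

definition greenL :: "'s set \<Rightarrow> ('s \<Rightarrow> 's \<Rightarrow> 's) \<Rightarrow> 's \<Rightarrow> 's \<Rightarrow> bool" where
  "greenL S m a b \<longleftrightarrow> insert a ((\<lambda>s. m s a) ` S) = insert b ((\<lambda>s. m s b) ` S)"

definition ideal_gen :: "'s set \<Rightarrow> ('s \<Rightarrow> 's \<Rightarrow> 's) \<Rightarrow> 's \<Rightarrow> 's set" where
  "ideal_gen S m a = {a} \<union> (\<lambda>s. m a s) ` S \<union> (\<lambda>s. m s a) ` S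
                      \<union> {m (m s a) t | s t. s \<in> S \<and> t \<in> S}"

definition greenJ :: "'s set \<Rightarrow> ('s \<Rightarrow> 's \<Rightarrow> 's) \<Rightarrow> 's \<Rightarrow> 's \<Rightarrow> bool" where
  "greenJ S m a b \<longleftrightarrow> ideal_gen S m a = ideal_gen S m b"

definition greenD :: "'s set \<Rightarrow> ('s \<Rightarrow> 's \<Rightarrow> 's) \<Rightarrow> 's \<Rightarrow> 's \<Rightarrow> bool" where
  "greenD S m a b \<longleftrightarrow> (\<exists>c\<in>S. greenR S m a c \<and> greenL S m c b)"

text \<open>Two-sided ideal (the empty set is allowed; it is J_0).\<close>
definition is_ideal :: "'s set \<Rightarrow> ('s \<Rightarrow> 's \<Rightarrow> 's) \<Rightarrow> 's set \<Rightarrow> bool" where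
  "is_ideal S m I \<longleftrightarrow> I \<subseteq> S \<and> (\<forall>s\<in>S. \<forall>i\<in>I. m s i \<in> I \<and> m i s \<in> I)"

end

(*
  Both products have three properties: the top blocks of a * s are unions of
  top blocks of a; every c with dom c contained in dom a is a right multiple
  of a, namely c = a * (a^-1 * c) where a^-1 swaps top and bottom; and
  a -> a^-1 is an anti-automorphism.  Hence the principal right ideal of a is
  determined by dom a, which gives R, and L follows by taking converses.
  If rank c <= rank a, relabelling the lines of c through an injection of
  dom c into ran a gives c' with dom c' = dom c and ran c' inside ran a, so
  c' = s * a and c = c' * t.  Thus the principal ideal of a consists of the
  elements of rank at most rank a, whence D = J = equality of rank, and an
  ideal, being downward closed in rank, is the set of elements of rank below
  the least rank it misses (or everything, with xi = |X|^+).
  For the star product the work lies in computing a * b when every top block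
  of b is a union of bottom blocks of a: the point-free classes of the glued
  graph then correspond to the lines of b.
*)
theory Submission
  imports Defs "HOL-Library.Disjoint_Sets"
begin

unbundle cardinal_syntax

section \<open>Partial partitions\<close>

lemma partition_on_block_eq:
  assumes "partition_on S \<P>" "P \<in> \<P>" "Q \<in> \<P>" "x \<in> P" "x \<in> Q"
  shows "P = Q"
  using disjointD[OF partition_onD2[OF assms(1)] assms(2,3)] assms(4,5) by auto

lemma partition_on_block_memE:
  assumes "partition_on S \<P>" "P \<in> \<P>"
  obtains x where "x \<in> P"
  using partition_onD3[OF assms(1)] assms(2) by fastforce

definition covered_by :: "'a set set \<Rightarrow> 'a set set \<Rightarrow> bool" where
  "covered_by \<P> \<A> \<longleftrightarrow> (\<forall>P\<in>\<P>. \<forall>x\<in>P. \<exists>A\<in>\<A>. x \<in> A \<and> A \<subseteq> P)"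

lemma covered_byE:
  assumes "covered_by \<P> \<A>" "P \<in> \<P>" "x \<in> P"
  obtains A where "A \<in> \<A>" "x \<in> A" "A \<subseteq> P"
  using assms unfolding covered_by_def by blast

lemma covered_by_refl: "covered_by \<A> \<A>"
  unfolding covered_by_def by blast

lemma covered_by_subset: "\<P> \<subseteq> \<A> \<Longrightarrow> covered_by \<P> \<A>"
  unfolding covered_by_def by blast

lemma covered_by_antisym:
  assumes "partition_on S \<P>" "partition_on S' \<A>" "covered_by \<P> \<A>" "covered_by \<A> \<P>"
  shows "\<P> = \<A>"
proof -
  have "\<P> \<subseteq> \<A>" if part: "partition_on S \<P>" and cov: "covered_by \<P> \<A>" "covered_by \<A> \<P>"
    for S :: "'a set" and \<P> \<A> :: "'a set set"
  proof
    fix P assume P: "P \<in> \<P>"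
    obtain x where "x \<in> P" using partition_on_block_memE[OF part P] .
    then obtain A where A: "A \<in> \<A>" "x \<in> A" "A \<subseteq> P" using covered_byE[OF cov(1) P] by blast
    obtain P' where P': "P' \<in> \<P>" "x \<in> P'" "P' \<subseteq> A" using covered_byE[OF cov(2) A(1,2)] by blast
    have "P' = P" using partition_on_block_eq[OF part P'(1) P P'(2) \<open>x \<in> P\<close>] .
    then show "P \<in> \<A>" using A P'(3) by auto
  qed
  from this[OF assms(1,3,4)] this[OF assms(2,4,3)] show ?thesis by (rule subset_antisym)
qed

lemma card_of_le_if_covered_by:
  assumes "partition_on S \<P>" "partition_on S' \<A>" "covered_by \<P> \<A>"
  shows "|\<P>| \<le>o |\<A>|"
proof -
  have "\<exists>A. A \<in> \<A> \<and> A \<subseteq> P" if "P \<in> \<P>" for P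
    using partition_on_block_memE[OF assms(1) that] covered_byE[OF assms(3) that] by metis
  then obtain f where f: "\<And>P. P \<in> \<P> \<Longrightarrow> f P \<in> \<A> \<and> f P \<subseteq> P" by metis
  have "inj_on f \<P>"
  proof (rule inj_onI)
    fix P Q assume PQ: "P \<in> \<P>" "Q \<in> \<P>" "f P = f Q"
    obtain x where "x \<in> f P" using partition_on_block_memE[OF assms(2)] f PQ(1) by blast
    then show "P = Q"
      using f[OF PQ(1)] f[OF PQ(2)] PQ partition_on_block_eq[OF assms(1) PQ(1,2)] by auto
  qed
  then show ?thesis using f card_of_ordLeq by blast
qed

lemma card_of_partition_on_le:
  assumes "partition_on S \<P>"
  shows "|\<P>| \<le>o |S|"
proof -
  have f: "(SOME x. x \<in> P) \<in> P" if "P \<in> \<P>" for P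
    using partition_on_block_memE[OF assms that] by (metis someI)
  have "inj_on (\<lambda>P. SOME x. x \<in> P) \<P>"
    using f partition_on_block_eq[OF assms] by (intro inj_onI) (metis (no_types))
  moreover have "(\<lambda>P. SOME x. x \<in> P) ` \<P> \<subseteq> S"
    using f partition_onD1[OF assms] by blast
  ultimately show ?thesis using card_of_ordLeq by blast
qed

section \<open>Elements of P_X\<close>

lemma PX_I:
  assumes "\<And>A B. (A,B) \<in> \<alpha> \<Longrightarrow> A \<noteq> {} \<and> B \<noteq> {} \<and> A \<subseteq> X \<and> B \<subseteq> X"
    and "\<And>A B C D. (A,B) \<in> \<alpha> \<Longrightarrow> (C,D) \<in> \<alpha> \<Longrightarrow> A \<inter> C \<noteq> {} \<or> B \<inter> D \<noteq> {} \<Longrightarrow> A = C \<and> B = D"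
  shows "\<alpha> \<in> PX X"
proof -
  have "A \<inter> C = {} \<and> B \<inter> D = {}" if "(A,B) \<in> \<alpha>" "(C,D) \<in> \<alpha>" "(A,B) \<noteq> (C,D)" for A B C D
    using assms(2)[OF that(1,2)] that(3) by blast
  then show ?thesis unfolding PX_def using assms(1) by (simp add: split_def) (metis prod.collapse)
qed

lemma PX_D:
  assumes "\<alpha> \<in> PX X" "(A,B) \<in> \<alpha>"
  shows "A \<noteq> {}" "B \<noteq> {}" "A \<subseteq> X" "B \<subseteq> X"
  using assms unfolding PX_def by auto

lemma PX_eq_if_meet:
  assumes "\<alpha> \<in> PX X" "(A,B) \<in> \<alpha>" "(C,D) \<in> \<alpha>" "A \<inter> C \<noteq> {} \<or> B \<inter> D \<noteq> {}"
  shows "A = C \<and> B = D"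
proof (rule ccontr)
  assume "\<not> (A = C \<and> B = D)"
  then have "A \<inter> C = {} \<and> B \<inter> D = {}" using assms(1-3) unfolding PX_def by fastforce
  then show False using assms(4) by blast
qed

lemma PX_eq_if_fst_meet:
  assumes "\<alpha> \<in> PX X" "(A,B) \<in> \<alpha>" "(C,D) \<in> \<alpha>" "x \<in> A" "x \<in> C"
  shows "A = C \<and> B = D"
  using PX_eq_if_meet[OF assms(1-3)] assms(4,5) by blast

lemma PX_eq_if_snd_meet:
  assumes "\<alpha> \<in> PX X" "(A,B) \<in> \<alpha>" "(C,D) \<in> \<alpha>" "y \<in> B" "y \<in> D"
  shows "A = C \<and> B = D"
  using PX_eq_if_meet[OF assms(1-3)] assms(4,5) by blast

lemma partition_on_dom_of:
  assumes "\<alpha> \<in> PX X"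
  shows "partition_on (\<Union>(dom_of \<alpha>)) (dom_of \<alpha>)"
proof (rule partition_onI)
  show "{} \<notin> dom_of \<alpha>" using PX_D(1)[OF assms] unfolding dom_of_def by blast
  fix A C assume "A \<in> dom_of \<alpha>" "C \<in> dom_of \<alpha>" "A \<noteq> C"
  then show "disjnt A C"
    using PX_eq_if_fst_meet[OF assms] unfolding dom_of_def disjnt_def by blast
qed simp

lemma card_of_dom_of:
  assumes "\<alpha> \<in> PX X"
  shows "|\<alpha>| =o |dom_of \<alpha>|"
proof (rule card_of_ordIsoI)
  show "bij_betw fst \<alpha> (dom_of \<alpha>)"
  proof (rule bij_betw_imageI)
    show "inj_on fst \<alpha>"
    proof (rule inj_onI)
      fix p q assume pq: "p \<in> \<alpha>" "q \<in> \<alpha>" "fst p = fst q"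
      obtain A B C D where p: "p = (A,B)" and q: "q = (C,D)" by (cases p, cases q)
      obtain x where "x \<in> A" using PX_D(1)[OF assms] pq(1) p by blast
      then show "p = q" using PX_eq_if_fst_meet[OF assms, of A B C D x] pq p q by simp
    qed
    show "fst ` \<alpha> = dom_of \<alpha>" unfolding dom_of_def by force
  qed
qed

definition converse_bip :: "'a bip \<Rightarrow> 'a bip" where
  "converse_bip \<alpha> = prod.swap ` \<alpha>"

lemma mem_converse_bip [simp]: "(B,A) \<in> converse_bip \<alpha> \<longleftrightarrow> (A,B) \<in> \<alpha>"
  unfolding converse_bip_def by force

lemma converse_bip_converse_bip [simp]: "converse_bip (converse_bip \<alpha>) = \<alpha>"
  unfolding converse_bip_def image_image by simp

lemma inj_converse_bip: "inj converse_bip"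
  by (metis converse_bip_converse_bip injI)

lemma dom_of_converse_bip [simp]: "dom_of (converse_bip \<alpha>) = ran_of \<alpha>"
  unfolding dom_of_def ran_of_def by simp

lemma ran_of_converse_bip [simp]: "ran_of (converse_bip \<alpha>) = dom_of \<alpha>"
  unfolding dom_of_def ran_of_def by simp

lemma converse_bip_PX:
  assumes "\<alpha> \<in> PX X"
  shows "converse_bip \<alpha> \<in> PX X"
proof (rule PX_I)
  fix B A assume "(B,A) \<in> converse_bip \<alpha>"
  then show "B \<noteq> {} \<and> A \<noteq> {} \<and> B \<subseteq> X \<and> A \<subseteq> X" using PX_D[OF assms] by simp
next
  fix B A D C assume "(B,A) \<in> converse_bip \<alpha>" "(D,C) \<in> converse_bip \<alpha>" "B \<inter> D \<noteq> {} \<or> A \<inter> C \<noteq> {}"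
  then have "(A,B) \<in> \<alpha>" "(C,D) \<in> \<alpha>" "A \<inter> C \<noteq> {} \<or> B \<inter> D \<noteq> {}" by auto
  then show "B = D \<and> A = C" using PX_eq_if_meet[OF assms] by blast
qed

lemma converse_bip_image_PX: "converse_bip ` PX X = PX X"
proof
  show "converse_bip ` PX X \<subseteq> PX X" using converse_bip_PX by blast
  show "PX X \<subseteq> converse_bip ` PX X"
  proof
    fix \<alpha> assume "\<alpha> \<in> PX X"
    then have "converse_bip (converse_bip \<alpha>) \<in> converse_bip ` PX X" using converse_bip_PX by blast
    then show "\<alpha> \<in> converse_bip ` PX X" by simp
  qed
qed

lemma card_of_converse_bip: "|converse_bip \<alpha>| =o |\<alpha>|"
  unfolding converse_bip_def
  by (rule ordIso_symmetric, rule card_of_ordIsoI, rule inj_on_imp_bij_betw, rule inj_swap)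

lemma partition_on_ran_of:
  assumes "\<alpha> \<in> PX X"
  shows "partition_on (\<Union>(ran_of \<alpha>)) (ran_of \<alpha>)"
  using partition_on_dom_of[OF converse_bip_PX[OF assms]] by simp

lemma card_of_ran_of:
  assumes "\<alpha> \<in> PX X"
  shows "|\<alpha>| =o |ran_of \<alpha>|"
proof -
  have "|\<alpha>| =o |converse_bip \<alpha>|" by (rule ordIso_symmetric[OF card_of_converse_bip])
  also have "|converse_bip \<alpha>| =o |ran_of \<alpha>|"
    using card_of_dom_of[OF converse_bip_PX[OF assms]] by simp
  finally show ?thesis .
qed

lemma card_of_PX_le:
  assumes "\<alpha> \<in> PX X"
  shows "|\<alpha>| \<le>o |X|"
proof -
  have "\<Union>(dom_of \<alpha>) \<subseteq> X" using PX_D(3)[OF assms] unfolding dom_of_def by blast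
  have "|\<alpha>| =o |dom_of \<alpha>|" by (rule card_of_dom_of[OF assms])
  also have "|dom_of \<alpha>| \<le>o |\<Union>(dom_of \<alpha>)|"
    by (rule card_of_partition_on_le[OF partition_on_dom_of[OF assms]])
  also have "|\<Union>(dom_of \<alpha>)| \<le>o |X|" by (rule card_of_mono1) fact
  finally show ?thesis .
qed

lemma dom_of_graph [simp]: "dom_of ((\<lambda>A. (A, f A)) ` \<A>) = \<A>"
  unfolding dom_of_def by auto

lemma ran_of_graph [simp]: "ran_of ((\<lambda>A. (A, f A)) ` \<A>) = f ` \<A>"
  unfolding ran_of_def by auto

lemma graph_PX:
  assumes a: "a \<in> PX X" and b: "b \<in> PX X"
    and f: "inj_on f (dom_of a)" "f ` dom_of a \<subseteq> ran_of b"
  shows "(\<lambda>A. (A, f A)) ` dom_of a \<in> PX X"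
proof (rule PX_I)
  fix A B assume "(A,B) \<in> (\<lambda>A. (A, f A)) ` dom_of a"
  then have "A \<in> dom_of a" "B \<in> ran_of b" using f(2) by auto
  then obtain B' A' where "(A,B') \<in> a" "(A',B) \<in> b" unfolding dom_of_def ran_of_def by blast
  then show "A \<noteq> {} \<and> B \<noteq> {} \<and> A \<subseteq> X \<and> B \<subseteq> X" using PX_D[OF a] PX_D[OF b] by simp
next
  fix A B C D
  assume AB: "(A,B) \<in> (\<lambda>A. (A, f A)) ` dom_of a" and CD: "(C,D) \<in> (\<lambda>A. (A, f A)) ` dom_of a"
    and meet: "A \<inter> C \<noteq> {} \<or> B \<inter> D \<noteq> {}"
  have A: "A \<in> dom_of a" "B = f A" and C: "C \<in> dom_of a" "D = f C" using AB CD by auto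
  have "A = C"
  proof (cases "A \<inter> C = {}")
    case True
    then obtain y where "y \<in> f A" "y \<in> f C" using meet A C by blast
    moreover have "f A \<in> ran_of b" "f C \<in> ran_of b" using A(1) C(1) f(2) by auto
    ultimately have "f A = f C" using partition_on_block_eq[OF partition_on_ran_of[OF b]] by simp
    then show ?thesis using f(1) A C by (simp add: inj_on_eq_iff)
  next
    case False
    then obtain x where "x \<in> A" "x \<in> C" by blast
    then show ?thesis using partition_on_block_eq[OF partition_on_dom_of[OF a] A(1) C(1)] by simp
  qed
  then show "A = C \<and> B = D" using A C by simp
qed

section \<open>Products sharing the properties of star and circ\<close>

lemma downward_closed_eq_card_less:
  fixes S :: "'b set set"
  assumes sub: "I \<subseteq> S" and ne: "I \<noteq> S"
    and down: "\<And>\<alpha> \<beta>. \<alpha> \<in> I \<Longrightarrow> \<beta> \<in> S \<Longrightarrow> |\<beta>| \<le>o |\<alpha>| \<Longrightarrow> \<beta> \<in> I"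
  obtains \<beta> where "\<beta> \<in> S" "I = {\<alpha>\<in>S. |\<alpha>| <o |\<beta>|}"
proof -
  obtain \<beta> where \<beta>: "\<beta> \<in> S - I" and min: "\<And>\<gamma>. \<gamma> \<in> S - I \<Longrightarrow> \<not> |\<gamma>| <o |\<beta>|"
  proof -
    have "card_of ` (S - I) \<noteq> {}" using sub ne by blast
    then obtain r where "r \<in> card_of ` (S - I)" "\<And>r'. r' <o r \<Longrightarrow> r' \<notin> card_of ` (S - I)"
      using wfE_min[OF wf_ordLess] by (metis ex_in_conv)
    then show thesis using that by blast
  qed
  have "I = {\<alpha>\<in>S. |\<alpha>| <o |\<beta>|}"
  proof (intro set_eqI iffI)
    fix \<alpha> assume "\<alpha> \<in> I"
    moreover have "|\<alpha>| <o |\<beta>|"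
      using down[OF \<open>\<alpha> \<in> I\<close>] \<beta> not_ordLess_iff_ordLeq[OF card_of_Well_order card_of_Well_order] by blast
    ultimately show "\<alpha> \<in> {\<alpha>\<in>S. |\<alpha>| <o |\<beta>|}" using sub by blast
  next
    fix \<alpha> assume "\<alpha> \<in> {\<alpha>\<in>S. |\<alpha>| <o |\<beta>|}"
    then show "\<alpha> \<in> I" using min by blast
  qed
  with \<beta> show thesis using that by blast
qed

locale bip_product =
  fixes X :: "'a set" and mult :: "'a bip \<Rightarrow> 'a bip \<Rightarrow> 'a bip"
  assumes mult_PX: "a \<in> PX X \<Longrightarrow> b \<in> PX X \<Longrightarrow> mult a b \<in> PX X"
    and converse_mult:
      "a \<in> PX X \<Longrightarrow> b \<in> PX X \<Longrightarrow> mult (converse_bip b) (converse_bip a) = converse_bip (mult a b)"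
    and covered_by_dom_mult: "a \<in> PX X \<Longrightarrow> b \<in> PX X \<Longrightarrow> covered_by (dom_of (mult a b)) (dom_of a)"
    and right_multiple_if_dom_subset:
      "a \<in> PX X \<Longrightarrow> c \<in> PX X \<Longrightarrow> dom_of c \<subseteq> dom_of a \<Longrightarrow> c \<in> mult a ` PX X"
    and right_multiple_if_dom_eq:
      "a \<in> PX X \<Longrightarrow> b \<in> PX X \<Longrightarrow> t \<in> PX X \<Longrightarrow> dom_of a = dom_of b \<Longrightarrow> mult b t \<in> mult a ` PX X"
begin

lemma left_multiple_if_ran_subset:
  assumes a: "a \<in> PX X" and c: "c \<in> PX X" and ran: "ran_of c \<subseteq> ran_of a"
  shows "c \<in> (\<lambda>s. mult s a) ` PX X"
proof -
  obtain s where s: "s \<in> PX X" "converse_bip c = mult (converse_bip a) s"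
    using right_multiple_if_dom_subset[OF converse_bip_PX[OF a] converse_bip_PX[OF c]] ran by auto
  have "mult (converse_bip s) a = c"
    using converse_mult[OF converse_bip_PX[OF a] s(1)] s(2) by (metis converse_bip_converse_bip)
  then show ?thesis using converse_bip_PX[OF s(1)] by blast
qed

lemma converse_principal_left_ideal:
  assumes "a \<in> PX X"
  shows "converse_bip ` insert a ((\<lambda>s. mult s a) ` PX X)
    = insert (converse_bip a) (mult (converse_bip a) ` PX X)"
proof -
  have "converse_bip ` (\<lambda>s. mult s a) ` PX X = (\<lambda>s. mult (converse_bip a) (converse_bip s)) ` PX X"
    unfolding image_image using converse_mult[OF _ assms] by (intro image_cong) simp_all
  also have "\<dots> = mult (converse_bip a) ` PX X"
    using converse_bip_image_PX by (metis image_image)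
  finally show ?thesis by simp
qed

lemma greenL_iff_greenR_converse:
  assumes "a \<in> PX X" "b \<in> PX X"
  shows "greenL (PX X) mult a b \<longleftrightarrow> greenR (PX X) mult (converse_bip a) (converse_bip b)"
  unfolding greenL_def greenR_def
  using inj_image_eq_iff[OF inj_converse_bip] converse_principal_left_ideal assms by metis

lemma principal_right_ideal_subset:
  assumes a: "a \<in> PX X" and b: "b \<in> PX X" and dom: "dom_of a = dom_of b"
  shows "insert a (mult a ` PX X) \<subseteq> insert b (mult b ` PX X)"
  using right_multiple_if_dom_subset[OF b a] right_multiple_if_dom_eq[OF b a] dom by auto

lemma greenR_iff_dom_eq:
  assumes a: "a \<in> PX X" and b: "b \<in> PX X"
  shows "greenR (PX X) mult a b \<longleftrightarrow> dom_of a = dom_of b"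
proof
  have cov: "covered_by (dom_of c) (dom_of a)" if "c \<in> insert a (mult a ` PX X)" "a \<in> PX X" for a c
    using that covered_by_refl covered_by_dom_mult by blast
  assume "greenR (PX X) mult a b"
  then have "covered_by (dom_of b) (dom_of a)" "covered_by (dom_of a) (dom_of b)"
    unfolding greenR_def using cov a b by (metis insertI1)+
  then show "dom_of a = dom_of b"
    using covered_by_antisym[OF partition_on_dom_of[OF a] partition_on_dom_of[OF b]] by blast
next
  assume "dom_of a = dom_of b"
  then show "greenR (PX X) mult a b"
    unfolding greenR_def using principal_right_ideal_subset a b by blast
qed

lemma greenL_iff_ran_eq:
  assumes "a \<in> PX X" "b \<in> PX X"
  shows "greenL (PX X) mult a b \<longleftrightarrow> ran_of a = ran_of b"
proof -
  have "greenL (PX X) mult a b \<longleftrightarrow> greenR (PX X) mult (converse_bip a) (converse_bip b)"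
    by (rule greenL_iff_greenR_converse[OF assms])
  also have "\<dots> \<longleftrightarrow> dom_of (converse_bip a) = dom_of (converse_bip b)"
    using greenR_iff_dom_eq converse_bip_PX assms by blast
  finally show ?thesis by simp
qed

lemma card_of_mult_le_left:
  assumes a: "a \<in> PX X" and b: "b \<in> PX X"
  shows "|mult a b| \<le>o |a|"
proof -
  have "|mult a b| =o |dom_of (mult a b)|" by (rule card_of_dom_of[OF mult_PX[OF a b]])
  also have "|dom_of (mult a b)| \<le>o |dom_of a|"
    by (rule card_of_le_if_covered_by[OF partition_on_dom_of[OF mult_PX[OF a b]]
          partition_on_dom_of[OF a] covered_by_dom_mult[OF a b]])
  also have "|dom_of a| =o |a|" by (rule ordIso_symmetric[OF card_of_dom_of[OF a]])
  finally show ?thesis .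
qed

lemma card_of_mult_le_right:
  assumes a: "a \<in> PX X" and b: "b \<in> PX X"
  shows "|mult a b| \<le>o |b|"
proof -
  have "|mult a b| =o |converse_bip (mult a b)|" by (rule ordIso_symmetric[OF card_of_converse_bip])
  also have "converse_bip (mult a b) = mult (converse_bip b) (converse_bip a)"
    by (rule converse_mult[OF a b, symmetric])
  also have "|mult (converse_bip b) (converse_bip a)| \<le>o |converse_bip b|"
    by (rule card_of_mult_le_left[OF converse_bip_PX[OF b] converse_bip_PX[OF a]])
  also have "|converse_bip b| =o |b|" by (rule card_of_converse_bip)
  finally show ?thesis .
qed

lemma two_sided_multiple_if_card_le:
  assumes a: "a \<in> PX X" and c: "c \<in> PX X" and le: "|c| \<le>o |a|"
  shows "\<exists>s\<in>PX X. \<exists>t\<in>PX X. mult (mult s a) t = c"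
proof -
  have "|dom_of c| =o |c|" by (rule ordIso_symmetric[OF card_of_dom_of[OF c]])
  also note le
  also have "|a| =o |ran_of a|" by (rule card_of_ran_of[OF a])
  finally have "|dom_of c| \<le>o |ran_of a|" .
  then obtain f where f: "inj_on f (dom_of c)" "f ` dom_of c \<subseteq> ran_of a"
    unfolding card_of_ordLeq[symmetric] by blast
  define c' where "c' = (\<lambda>A. (A, f A)) ` dom_of c"
  have c': "c' \<in> PX X" unfolding c'_def by (rule graph_PX[OF c a f])
  have "ran_of c' \<subseteq> ran_of a" "dom_of c \<subseteq> dom_of c'" unfolding c'_def using f(2) by simp_all
  then obtain s t where "s \<in> PX X" "c' = mult s a" "t \<in> PX X" "c = mult c' t"
    using left_multiple_if_ran_subset[OF a c'] right_multiple_if_dom_subset[OF c' c] by blast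
  then show ?thesis by blast
qed

lemma ideal_gen_eq_card_le:
  assumes a: "a \<in> PX X"
  shows "ideal_gen (PX X) mult a = {c\<in>PX X. |c| \<le>o |a|}"
proof
  show "ideal_gen (PX X) mult a \<subseteq> {c\<in>PX X. |c| \<le>o |a|}"
  proof
    fix c assume "c \<in> ideal_gen (PX X) mult a"
    then consider "c = a" | s where "s \<in> PX X" "c = mult a s" | s where "s \<in> PX X" "c = mult s a"
      | s t where "s \<in> PX X" "t \<in> PX X" "c = mult (mult s a) t"
      unfolding ideal_gen_def by blast
    then show "c \<in> {c\<in>PX X. |c| \<le>o |a|}"
    proof cases
      case 1
      then show ?thesis using a ordLeq_refl[OF card_of_Card_order] by simp
    next
      case 2
      then show ?thesis using card_of_mult_le_left mult_PX a by simp
    next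
      case 3
      then show ?thesis using card_of_mult_le_right mult_PX a by simp
    next
      case 4
      have "|c| \<le>o |mult s a|" using card_of_mult_le_left[OF mult_PX[OF 4(1) a] 4(2)] 4(3) by simp
      also have "|mult s a| \<le>o |a|" by (rule card_of_mult_le_right[OF 4(1) a])
      finally show ?thesis using 4 mult_PX a by simp
    qed
  qed
  show "{c\<in>PX X. |c| \<le>o |a|} \<subseteq> ideal_gen (PX X) mult a"
    unfolding ideal_gen_def using two_sided_multiple_if_card_le[OF a] by blast
qed

lemma greenJ_iff_card_eq:
  assumes a: "a \<in> PX X" and b: "b \<in> PX X"
  shows "greenJ (PX X) mult a b \<longleftrightarrow> |a| =o |b|"
proof
  assume "greenJ (PX X) mult a b"
  then have eq: "{c\<in>PX X. |c| \<le>o |a|} = {c\<in>PX X. |c| \<le>o |b|}"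
    unfolding greenJ_def ideal_gen_eq_card_le[OF a] ideal_gen_eq_card_le[OF b] .
  then have "|c| \<le>o |a| \<longleftrightarrow> |c| \<le>o |b|" if "c \<in> PX X" for c
    using that by blast
  then have "|a| \<le>o |b|" "|b| \<le>o |a|"
    using a b ordLeq_refl[OF card_of_Card_order] by blast+
  then show "|a| =o |b|" using ordIso_iff_ordLeq by blast
next
  assume iso: "|a| =o |b|"
  have "|c| \<le>o |a| \<longleftrightarrow> |c| \<le>o |b|" for c :: "'a bip"
    using ordLeq_ordIso_trans[OF _ iso] ordLeq_ordIso_trans[OF _ ordIso_symmetric[OF iso]] by blast
  then show "greenJ (PX X) mult a b"
    unfolding greenJ_def ideal_gen_eq_card_le[OF a] ideal_gen_eq_card_le[OF b] by simp
qed

lemma greenD_iff_card_eq: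
  assumes a: "a \<in> PX X" and b: "b \<in> PX X"
  shows "greenD (PX X) mult a b \<longleftrightarrow> |a| =o |b|"
proof
  assume "greenD (PX X) mult a b"
  then obtain c where c: "c \<in> PX X" "greenR (PX X) mult a c" "greenL (PX X) mult c b"
    unfolding greenD_def by blast
  have "|a| =o |dom_of a|" by (rule card_of_dom_of[OF a])
  also have "dom_of a = dom_of c" using greenR_iff_dom_eq[OF a c(1)] c(2) ..
  also have "|dom_of c| =o |c|" by (rule ordIso_symmetric[OF card_of_dom_of[OF c(1)]])
  also have "|c| =o |ran_of c|" by (rule card_of_ran_of[OF c(1)])
  also have "ran_of c = ran_of b" using greenL_iff_ran_eq[OF c(1) b] c(3) ..
  also have "|ran_of b| =o |b|" by (rule ordIso_symmetric[OF card_of_ran_of[OF b]])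
  finally show "|a| =o |b|" .
next
  assume "|a| =o |b|"
  have "|dom_of a| =o |ran_of b|"
    using ordIso_transitive[OF ordIso_transitive[OF ordIso_symmetric[OF card_of_dom_of[OF a]] \<open>|a| =o |b|\<close>]
        card_of_ran_of[OF b]] .
  then obtain f where f: "bij_betw f (dom_of a) (ran_of b)" using card_of_ordIso by blast
  define c where "c = (\<lambda>A. (A, f A)) ` dom_of a"
  have c: "c \<in> PX X" unfolding c_def
    by (rule graph_PX[OF a b]) (use f in \<open>auto simp: bij_betw_def\<close>)
  have "greenR (PX X) mult a c" using greenR_iff_dom_eq[OF a c] unfolding c_def by simp
  moreover have "greenL (PX X) mult c b"
    using greenL_iff_ran_eq[OF c b] f unfolding c_def bij_betw_def by simp
  ultimately show "greenD (PX X) mult a b" unfolding greenD_def using c by blast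
qed

lemma ideal_eq_card_less:
  assumes I: "is_ideal (PX X) mult I"
  shows "\<exists>\<xi> :: 'a set rel. Card_order \<xi> \<and> \<xi> \<le>o cardSuc |X| \<and> I = {\<alpha>\<in>PX X. |\<alpha>| <o \<xi>}"
proof (cases "I = PX X")
  case True
  have "|\<alpha>| <o cardSuc |X|" if "\<alpha> \<in> PX X" for \<alpha>
    using card_of_PX_le[OF that] cardSuc_greater[OF card_of_Card_order]
    by (rule ordLeq_ordLess_trans)
  then have "I = {\<alpha>\<in>PX X. |\<alpha>| <o cardSuc |X|}" using True by blast
  moreover have "Card_order (cardSuc (card_of X))" by (rule cardSuc_Card_order[OF card_of_Card_order])
  ultimately show ?thesis using ordLeq_refl by blast
next
  case False
  have sub: "I \<subseteq> PX X" using I unfolding is_ideal_def by blast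
  have down: "\<beta> \<in> I" if \<alpha>: "\<alpha> \<in> I" and \<beta>: "\<beta> \<in> PX X" "|\<beta>| \<le>o |\<alpha>|" for \<alpha> \<beta>
  proof -
    obtain s t where st: "s \<in> PX X" "t \<in> PX X" "mult (mult s \<alpha>) t = \<beta>"
      using two_sided_multiple_if_card_le[OF _ \<beta>] \<alpha> sub by blast
    have "mult s \<alpha> \<in> I" using I \<alpha> st(1) unfolding is_ideal_def by blast
    then have "mult (mult s \<alpha>) t \<in> I" using I st(2) unfolding is_ideal_def by blast
    then show ?thesis using st(3) by simp
  qed
  obtain \<beta> where \<beta>: "\<beta> \<in> PX X" and I_eq: "I = {\<alpha>\<in>PX X. |\<alpha>| <o |\<beta>|}"
    by (rule downward_closed_eq_card_less[OF sub False down])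
  have iso: "|\<beta>| =o |dom_of \<beta>|" by (rule card_of_dom_of[OF \<beta>])
  have "|\<alpha>| <o |\<beta>| \<longleftrightarrow> |\<alpha>| <o |dom_of \<beta>|" for \<alpha> :: "'a bip"
    using ordLess_ordIso_trans[OF _ iso, of "|\<alpha>|"] ordLess_ordIso_trans[OF _ ordIso_symmetric[OF iso], of "|\<alpha>|"]
    by (rule iffI)
  then have "I = {\<alpha>\<in>PX X. |\<alpha>| <o |dom_of \<beta>|}" unfolding I_eq by simp
  moreover have "|dom_of \<beta>| \<le>o cardSuc |X|"
  proof -
    have "|dom_of \<beta>| =o |\<beta>|" by (rule ordIso_symmetric[OF iso])
    also have "|\<beta>| \<le>o |X|" by (rule card_of_PX_le[OF \<beta>])
    also have "|X| <o cardSuc |X|" by (rule cardSuc_greater[OF card_of_Card_order])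
    finally show ?thesis by (rule ordLess_imp_ordLeq)
  qed
  ultimately show ?thesis
    using card_of_Card_order[of "dom_of \<beta>"] by (intro exI[of _ "|dom_of \<beta>|"]) simp
qed

end

section \<open>The product circ\<close>

lemma mem_circ: "(A,D) \<in> circ \<alpha> \<beta> \<longleftrightarrow> (\<exists>B. (A,B) \<in> \<alpha> \<and> (B,D) \<in> \<beta>)"
  unfolding circ_def by simp

lemma circ_PX:
  assumes a: "\<alpha> \<in> PX X" and b: "\<beta> \<in> PX X"
  shows "circ \<alpha> \<beta> \<in> PX X"
proof (rule PX_I)
  fix A D assume "(A,D) \<in> circ \<alpha> \<beta>"
  then obtain B where "(A,B) \<in> \<alpha>" "(B,D) \<in> \<beta>" unfolding mem_circ by blast
  then show "A \<noteq> {} \<and> D \<noteq> {} \<and> A \<subseteq> X \<and> D \<subseteq> X" using PX_D[OF a] PX_D[OF b] by simp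
next
  fix A D C E assume "(A,D) \<in> circ \<alpha> \<beta>" "(C,E) \<in> circ \<alpha> \<beta>" and meet: "A \<inter> C \<noteq> {} \<or> D \<inter> E \<noteq> {}"
  then obtain B B' where AB: "(A,B) \<in> \<alpha>" "(B,D) \<in> \<beta>" and CB': "(C,B') \<in> \<alpha>" "(B',E) \<in> \<beta>"
    unfolding mem_circ by blast
  obtain y where y: "y \<in> B" using PX_D(2)[OF a AB(1)] by blast
  show "A = C \<and> D = E"
  proof (cases "A \<inter> C = {}")
    case True
    then have "D = E \<and> B = B'" using PX_eq_if_meet[OF b AB(2) CB'(2)] meet by blast
    then show ?thesis using PX_eq_if_snd_meet[OF a AB(1) CB'(1) y] y by simp
  next
    case False
    then have "A = C \<and> B = B'" using PX_eq_if_meet[OF a AB(1) CB'(1)] by blast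
    then show ?thesis using PX_eq_if_fst_meet[OF b AB(2) CB'(2) y] y by simp
  qed
qed

lemma converse_circ: "circ (converse_bip \<beta>) (converse_bip \<alpha>) = converse_bip (circ \<alpha> \<beta>)"
  unfolding circ_def converse_bip_def by auto

lemma dom_of_circ_subset: "dom_of (circ \<alpha> \<beta>) \<subseteq> dom_of \<alpha>"
  unfolding dom_of_def circ_def by blast

lemma circ_circ_converse:
  assumes a: "a \<in> PX X" and dom: "dom_of c \<subseteq> dom_of a"
  shows "circ a (circ (converse_bip a) c) = c"
proof (intro set_eqI iffI)
  fix p assume "p \<in> circ a (circ (converse_bip a) c)"
  then obtain A D B A' where p: "p = (A,D)" and "(A,B) \<in> a" "(A',B) \<in> a" "(A',D) \<in> c"
    unfolding circ_def by auto
  moreover obtain y where "y \<in> B" using PX_D(2)[OF a \<open>(A,B) \<in> a\<close>] by blast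
  ultimately show "p \<in> c" using PX_eq_if_snd_meet[OF a \<open>(A,B) \<in> a\<close> \<open>(A',B) \<in> a\<close>] by auto
next
  fix p assume "p \<in> c"
  then obtain A D where p: "p = (A,D)" "(A,D) \<in> c" by (cases p) auto
  then obtain B where "(A,B) \<in> a" using dom unfolding dom_of_def by blast
  then show "p \<in> circ a (circ (converse_bip a) c)" using p unfolding circ_def by auto
qed

lemma bip_product_circ: "bip_product X circ"
proof
  fix a b assume "a \<in> PX X" "b \<in> PX X"
  then show "circ a b \<in> PX X" by (rule circ_PX)
next
  fix a b :: "'a bip"
  show "circ (converse_bip b) (converse_bip a) = converse_bip (circ a b)" by (rule converse_circ)
  show "covered_by (dom_of (circ a b)) (dom_of a)" by (rule covered_by_subset[OF dom_of_circ_subset])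
next
  fix a c assume a: "a \<in> PX X" and c: "c \<in> PX X" and dom: "dom_of c \<subseteq> dom_of a"
  have "circ a (circ (converse_bip a) c) = c" by (rule circ_circ_converse[OF a dom])
  then show "c \<in> circ a ` PX X" using circ_PX[OF converse_bip_PX[OF a] c] by (metis image_eqI)
next
  fix a b t assume a: "a \<in> PX X" and b: "b \<in> PX X" and t: "t \<in> PX X" and "dom_of a = dom_of b"
  then have "circ a (circ (converse_bip a) (circ b t)) = circ b t"
    using circ_circ_converse dom_of_circ_subset by metis
  then show "circ b t \<in> circ a ` PX X"
    using circ_PX[OF converse_bip_PX[OF a] circ_PX[OF b t]] by (metis image_eqI)
qed

section \<open>The product star\<close>

lemma star_edgesI1:
  "(A,B) \<in> \<alpha> \<Longrightarrow> u \<in> T ` A \<union> M ` B \<Longrightarrow> v \<in> T ` A \<union> M ` B \<Longrightarrow> (u,v) \<in> star_edges \<alpha> \<beta>"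
  unfolding star_edges_def by blast

lemma star_edgesI2:
  "(B,D) \<in> \<beta> \<Longrightarrow> u \<in> M ` B \<union> Bt ` D \<Longrightarrow> v \<in> M ` B \<union> Bt ` D \<Longrightarrow> (u,v) \<in> star_edges \<alpha> \<beta>"
  unfolding star_edges_def by blast

lemma star_edgesE:
  assumes "(u,v) \<in> star_edges \<alpha> \<beta>"
  obtains A B where "(A,B) \<in> \<alpha>" "u \<in> T ` A \<union> M ` B" "v \<in> T ` A \<union> M ` B"
  | B D where "(B,D) \<in> \<beta>" "u \<in> M ` B \<union> Bt ` D" "v \<in> M ` B \<union> Bt ` D"
  using assms unfolding star_edges_def by blast

lemma sym_star_edges: "sym (star_edges \<alpha> \<beta>)"
proof (rule symI)
  fix u v assume "(u,v) \<in> star_edges \<alpha> \<beta>"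
  then show "(v,u) \<in> star_edges \<alpha> \<beta>"
    by (cases rule: star_edgesE) (simp_all add: star_edgesI1 star_edgesI2)
qed

lemma star_class_eq:
  assumes "v \<in> star_class \<alpha> \<beta> u"
  shows "star_class \<alpha> \<beta> v = star_class \<alpha> \<beta> u"
proof -
  have uv: "(u,v) \<in> (star_edges \<alpha> \<beta>)\<^sup>*" using assms unfolding star_class_def by simp
  then have vu: "(v,u) \<in> (star_edges \<alpha> \<beta>)\<^sup>*" by (rule symD[OF sym_rtrancl[OF sym_star_edges]])
  show ?thesis
    unfolding star_class_def by (intro Collect_cong) (meson rtrancl_trans uv vu)
qed

lemma star_class_self: "u \<in> star_class \<alpha> \<beta> u"
  unfolding star_class_def by simp

lemma star_class_eqI:
  assumes closed: "\<And>v w. v \<in> K \<Longrightarrow> (v,w) \<in> star_edges \<alpha> \<beta> \<Longrightarrow> w \<in> K"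
    and hub: "\<And>v. v \<in> K \<Longrightarrow> (v,h) \<in> (star_edges \<alpha> \<beta>)\<^sup>*"
    and u: "u \<in> K"
  shows "star_class \<alpha> \<beta> u = K"
proof
  show "star_class \<alpha> \<beta> u \<subseteq> K"
  proof
    fix v assume "v \<in> star_class \<alpha> \<beta> u"
    then have "(u,v) \<in> (star_edges \<alpha> \<beta>)\<^sup>*" unfolding star_class_def by simp
    then show "v \<in> K" by (induction rule: rtrancl_induct) (use u closed in blast)+
  qed
  show "K \<subseteq> star_class \<alpha> \<beta> u"
  proof
    fix v assume "v \<in> K"
    then have "(h,v) \<in> (star_edges \<alpha> \<beta>)\<^sup>*"
      using symD[OF sym_rtrancl[OF sym_star_edges] hub] by blast
    then show "v \<in> star_class \<alpha> \<beta> u"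
      using hub[OF u] unfolding star_class_def by (simp add: rtrancl_trans)
  qed
qed

lemma is_point_simps [simp]:
  "is_point X \<alpha> \<beta> (T x) \<longleftrightarrow> x \<in> X \<and> (\<forall>(A,B)\<in>\<alpha>. x \<notin> A)"
  "is_point X \<alpha> \<beta> (M y) \<longleftrightarrow> y \<in> X \<and> ((\<forall>(A,B)\<in>\<alpha>. y \<notin> B) \<or> (\<forall>(B,D)\<in>\<beta>. y \<notin> B))"
  "is_point X \<alpha> \<beta> (Bt z) \<longleftrightarrow> z \<in> X \<and> (\<forall>(B,D)\<in>\<beta>. z \<notin> D)"
  unfolding is_point_def by auto

lemma star_memI:
  assumes "u \<in> T ` X \<union> Bt ` X" "\<forall>w\<in>star_class \<alpha> \<beta> u. \<not> is_point X \<alpha> \<beta> w"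
    "{x\<in>X. T x \<in> star_class \<alpha> \<beta> u} \<noteq> {}" "{x\<in>X. Bt x \<in> star_class \<alpha> \<beta> u} \<noteq> {}"
  shows "({x\<in>X. T x \<in> star_class \<alpha> \<beta> u}, {x\<in>X. Bt x \<in> star_class \<alpha> \<beta> u}) \<in> star X \<alpha> \<beta>"
  unfolding star_def using assms by blast

lemma star_memE:
  assumes "p \<in> star X \<alpha> \<beta>"
  obtains u where "u \<in> T ` X \<union> Bt ` X" "\<forall>w\<in>star_class \<alpha> \<beta> u. \<not> is_point X \<alpha> \<beta> w"
    "p = ({x\<in>X. T x \<in> star_class \<alpha> \<beta> u}, {x\<in>X. Bt x \<in> star_class \<alpha> \<beta> u})"
    "{x\<in>X. T x \<in> star_class \<alpha> \<beta> u} \<noteq> {}" "{x\<in>X. Bt x \<in> star_class \<alpha> \<beta> u} \<noteq> {}"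
  using assms unfolding star_def by blast

lemma star_eq_traces:
  fixes \<K> :: "'a lvl set set"
  assumes closed: "\<And>K v w. K \<in> \<K> \<Longrightarrow> v \<in> K \<Longrightarrow> (v,w) \<in> star_edges \<alpha> \<beta> \<Longrightarrow> w \<in> K"
    and hub: "\<And>K. K \<in> \<K> \<Longrightarrow> \<exists>h. \<forall>v\<in>K. (v,h) \<in> (star_edges \<alpha> \<beta>)\<^sup>*"
    and point_free: "\<And>K w. K \<in> \<K> \<Longrightarrow> w \<in> K \<Longrightarrow> \<not> is_point X \<alpha> \<beta> w"
    and exhaustive: "\<And>u. u \<in> T ` X \<union> Bt ` X \<Longrightarrow> \<forall>w\<in>star_class \<alpha> \<beta> u. \<not> is_point X \<alpha> \<beta> w
      \<Longrightarrow> \<exists>K\<in>\<K>. u \<in> K"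
    and traces: "\<And>K. K \<in> \<K> \<Longrightarrow> {x\<in>X. T x \<in> K} \<noteq> {} \<and> {x\<in>X. Bt x \<in> K} \<noteq> {}"
  shows "star X \<alpha> \<beta> = (\<lambda>K. ({x\<in>X. T x \<in> K}, {x\<in>X. Bt x \<in> K})) ` \<K>"
proof -
  have class_eq: "star_class \<alpha> \<beta> u = K" if K: "K \<in> \<K>" and u: "u \<in> K" for K u
  proof -
    obtain h where "\<forall>v\<in>K. (v,h) \<in> (star_edges \<alpha> \<beta>)\<^sup>*" using hub[OF K] by blast
    then show ?thesis by (intro star_class_eqI[where h = h and K = K]) (use closed[OF K] u in auto)
  qed
  show ?thesis
  proof (intro set_eqI iffI)
    fix p assume "p \<in> star X \<alpha> \<beta>"
    then obtain u where u: "u \<in> T ` X \<union> Bt ` X" "\<forall>w\<in>star_class \<alpha> \<beta> u. \<not> is_point X \<alpha> \<beta> w"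
      "p = ({x\<in>X. T x \<in> star_class \<alpha> \<beta> u}, {x\<in>X. Bt x \<in> star_class \<alpha> \<beta> u})"
      by (rule star_memE)
    obtain K where "K \<in> \<K>" "u \<in> K" using exhaustive[OF u(1,2)] by blast
    then show "p \<in> (\<lambda>K. ({x\<in>X. T x \<in> K}, {x\<in>X. Bt x \<in> K})) ` \<K>"
      using u(3) class_eq by simp
  next
    fix p assume "p \<in> (\<lambda>K. ({x\<in>X. T x \<in> K}, {x\<in>X. Bt x \<in> K})) ` \<K>"
    then obtain K where K: "K \<in> \<K>" "p = ({x\<in>X. T x \<in> K}, {x\<in>X. Bt x \<in> K})" by blast
    then obtain x where x: "x \<in> X" "T x \<in> K" using traces by blast
    have "star_class \<alpha> \<beta> (T x) = K" using class_eq[OF K(1) x(2)] .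
    then show "p \<in> star X \<alpha> \<beta>"
      using star_memI[of "T x" X \<alpha> \<beta>] x(1) K point_free traces by auto
  qed
qed

definition bip_preimage :: "'a bip \<Rightarrow> 'a set \<Rightarrow> 'a set" where
  "bip_preimage \<alpha> B = \<Union>{A. \<exists>B'. (A,B') \<in> \<alpha> \<and> B' \<subseteq> B}"

lemma mem_bip_preimage: "x \<in> bip_preimage \<alpha> B \<longleftrightarrow> (\<exists>A B'. (A,B') \<in> \<alpha> \<and> B' \<subseteq> B \<and> x \<in> A)"
  unfolding bip_preimage_def by blast

(* If every top block of beta is a union of bottom blocks of alpha, these are the classes of
   the glued graph through the lines (B,D) of beta. *)
definition star_component :: "'a bip \<Rightarrow> 'a set \<times> 'a set \<Rightarrow> 'a lvl set" where
  "star_component \<alpha> = (\<lambda>(B,D). T ` bip_preimage \<alpha> B \<union> M ` B \<union> Bt ` D)"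

lemma mem_star_component [simp]:
  "T x \<in> star_component \<alpha> (B,D) \<longleftrightarrow> x \<in> bip_preimage \<alpha> B"
  "M y \<in> star_component \<alpha> (B,D) \<longleftrightarrow> y \<in> B"
  "Bt z \<in> star_component \<alpha> (B,D) \<longleftrightarrow> z \<in> D"
  unfolding star_component_def by auto

context
  fixes X :: "'a set" and \<alpha> \<beta> :: "'a bip"
  assumes \<alpha>: "\<alpha> \<in> PX X" and \<beta>: "\<beta> \<in> PX X" and cov: "covered_by (dom_of \<beta>) (ran_of \<alpha>)"
begin

lemma ran_block_subset_if_meet:
  assumes "(A,B) \<in> \<alpha>" "(B',D) \<in> \<beta>" "y \<in> B" "y \<in> B'"
  shows "B \<subseteq> B'"
proof -
  have "B' \<in> dom_of \<beta>" "B \<in> ran_of \<alpha>" using assms(1,2) unfolding dom_of_def ran_of_def by blast+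
  then obtain B'' where B'': "B'' \<in> ran_of \<alpha>" "y \<in> B''" "B'' \<subseteq> B'"
    using covered_byE[OF cov _ assms(4)] by blast
  have "B'' = B"
    by (rule partition_on_block_eq[OF partition_on_ran_of[OF \<alpha>] B''(1) \<open>B \<in> ran_of \<alpha>\<close> B''(2) assms(3)])
  with B''(3) show ?thesis by simp
qed

lemma star_component_closed:
  assumes BD: "(B,D) \<in> \<beta>" and v: "v \<in> star_component \<alpha> (B,D)" and e: "(v,w) \<in> star_edges \<alpha> \<beta>"
  shows "w \<in> star_component \<alpha> (B,D)"
  using e
proof (cases rule: star_edgesE)
  case (1 A1 B1)
  have "B1 \<subseteq> B"
  proof (cases v)
    case (T x)
    with 1 v obtain A2 B2 where "(A2,B2) \<in> \<alpha>" "B2 \<subseteq> B" "x \<in> A2" "x \<in> A1"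
      by (auto simp: mem_bip_preimage)
    then show ?thesis using PX_eq_if_fst_meet[OF \<alpha> 1(1)] by blast
  next
    case (M y)
    with 1 v show ?thesis using ran_block_subset_if_meet[OF 1(1) BD] by auto
  next
    case (Bt z)
    with 1 show ?thesis by auto
  qed
  then have "T ` A1 \<union> M ` B1 \<subseteq> star_component \<alpha> (B,D)"
    using 1(1) unfolding star_component_def bip_preimage_def by auto
  with 1 show ?thesis by blast
next
  case (2 B1 D1)
  have "B1 = B \<and> D1 = D"
  proof (cases v)
    case (T x)
    with 2 show ?thesis by auto
  next
    case (M y)
    with 2 v show ?thesis using PX_eq_if_fst_meet[OF \<beta> 2(1) BD] by auto
  next
    case (Bt z)
    with 2 v show ?thesis using PX_eq_if_snd_meet[OF \<beta> 2(1) BD] by auto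
  qed
  with 2 show ?thesis unfolding star_component_def by auto
qed

lemma star_component_connected:
  assumes BD: "(B,D) \<in> \<beta>" and y0: "y0 \<in> B" and v: "v \<in> star_component \<alpha> (B,D)"
  shows "(v, M y0) \<in> (star_edges \<alpha> \<beta>)\<^sup>*"
proof (cases v)
  case (T x)
  with v obtain A B' where AB': "(A,B') \<in> \<alpha>" "B' \<subseteq> B" "x \<in> A"
    by (auto simp: mem_bip_preimage)
  obtain y where "y \<in> B'" using PX_D(2)[OF \<alpha> AB'(1)] by blast
  then have "(T x, M y) \<in> star_edges \<alpha> \<beta>" "(M y, M y0) \<in> star_edges \<alpha> \<beta>"
    using star_edgesI1[OF AB'(1)] star_edgesI2[OF BD] y0 AB' by auto
  then show ?thesis using T by (meson converse_rtrancl_into_rtrancl r_into_rtrancl)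
next
  case (M y)
  then show ?thesis using star_edgesI2[OF BD] v y0 by auto
next
  case (Bt z)
  then show ?thesis using star_edgesI2[OF BD] v y0 by auto
qed

lemma star_component_point_free:
  assumes BD: "(B,D) \<in> \<beta>" and w: "w \<in> star_component \<alpha> (B,D)"
  shows "\<not> is_point X \<alpha> \<beta> w"
proof (cases w)
  case (T x)
  with w obtain A B' where "(A,B') \<in> \<alpha>" "x \<in> A" by (auto simp: mem_bip_preimage)
  with T show ?thesis by auto
next
  case (M y)
  with w have "y \<in> B" by simp
  moreover obtain B' where "B' \<in> ran_of \<alpha>" "y \<in> B'"
    using covered_byE[OF cov _ \<open>y \<in> B\<close>] BD unfolding dom_of_def by blast
  ultimately show ?thesis using M BD unfolding ran_of_def by auto
next
  case (Bt z)
  with w BD show ?thesis by auto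
qed

lemma star_component_exhaustive:
  assumes u: "u \<in> T ` X \<union> Bt ` X" and free: "\<forall>w\<in>star_class \<alpha> \<beta> u. \<not> is_point X \<alpha> \<beta> w"
  shows "\<exists>(B,D)\<in>\<beta>. u \<in> star_component \<alpha> (B,D)"
proof (cases u)
  case (T x)
  with u free star_class_self obtain A B where AB: "(A,B) \<in> \<alpha>" "x \<in> A" by fastforce
  obtain y where y: "y \<in> B" "y \<in> X" using PX_D(2,4)[OF \<alpha> AB(1)] by blast
  have "M y \<in> star_class \<alpha> \<beta> u"
    using star_edgesI1[OF AB(1), of "T x" "M y"] AB(2) y(1) T unfolding star_class_def by auto
  then have "\<not> is_point X \<alpha> \<beta> (M y)" using free by blast
  then obtain B1 D1 where B1: "(B1,D1) \<in> \<beta>" "y \<in> B1" using y(2) by auto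
  then have "x \<in> bip_preimage \<alpha> B1"
    using ran_block_subset_if_meet[OF AB(1) B1(1) y(1)] AB unfolding mem_bip_preimage by blast
  then show ?thesis using T B1 by auto
next
  case (M y)
  with u show ?thesis by auto
next
  case (Bt z)
  with u free star_class_self show ?thesis by fastforce
qed

lemma bip_preimage_nonempty:
  assumes "(B,D) \<in> \<beta>"
  shows "bip_preimage \<alpha> B \<noteq> {}"
proof -
  obtain y where "y \<in> B" using PX_D(1)[OF \<beta> assms] by blast
  then obtain B' where "B' \<in> ran_of \<alpha>" "B' \<subseteq> B"
    using covered_byE[OF cov] assms unfolding dom_of_def by blast
  then obtain A where "(A,B') \<in> \<alpha>" unfolding ran_of_def by blast
  then show ?thesis using PX_D(1)[OF \<alpha>] \<open>B' \<subseteq> B\<close> unfolding bip_preimage_def by blast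
qed

lemma star_of_covered: "star X \<alpha> \<beta> = (\<lambda>(B,D). (bip_preimage \<alpha> B, D)) ` \<beta>"
proof -
  let ?traces = "\<lambda>K. ({x\<in>X. T x \<in> K}, {x\<in>X. Bt x \<in> K})"
  have traces: "?traces (star_component \<alpha> p) = (\<lambda>(B,D). (bip_preimage \<alpha> B, D)) p" if "p \<in> \<beta>" for p
  proof -
    obtain B D where p: "p = (B,D)" by (cases p)
    have "bip_preimage \<alpha> B \<subseteq> X" using PX_D(3)[OF \<alpha>] unfolding bip_preimage_def by blast
    then show ?thesis using PX_D(4)[OF \<beta>] that p by auto
  qed
  have "star X \<alpha> \<beta> = ?traces ` star_component \<alpha> ` \<beta>"
  proof (rule star_eq_traces)
    fix K v w assume "K \<in> star_component \<alpha> ` \<beta>" "v \<in> K" "(v,w) \<in> star_edges \<alpha> \<beta>"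
    then show "w \<in> K" using star_component_closed by auto
  next
    fix K assume "K \<in> star_component \<alpha> ` \<beta>"
    then obtain B D where BD: "(B,D) \<in> \<beta>" "K = star_component \<alpha> (B,D)" by auto
    obtain y0 where "y0 \<in> B" using PX_D(1)[OF \<beta> BD(1)] by blast
    then show "\<exists>h. \<forall>v\<in>K. (v,h) \<in> (star_edges \<alpha> \<beta>)\<^sup>*"
      using star_component_connected[OF BD(1)] BD(2) by blast
  next
    fix K w assume "K \<in> star_component \<alpha> ` \<beta>" "w \<in> K"
    then show "\<not> is_point X \<alpha> \<beta> w" using star_component_point_free by auto
  next
    fix u assume "u \<in> T ` X \<union> Bt ` X" "\<forall>w\<in>star_class \<alpha> \<beta> u. \<not> is_point X \<alpha> \<beta> w"
    then show "\<exists>K\<in>star_component \<alpha> ` \<beta>. u \<in> K"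
      using star_component_exhaustive by fastforce
  next
    fix K assume "K \<in> star_component \<alpha> ` \<beta>"
    then obtain B D where BD: "(B,D) \<in> \<beta>" "K = star_component \<alpha> (B,D)" by auto
    then show "{x\<in>X. T x \<in> K} \<noteq> {} \<and> {x\<in>X. Bt x \<in> K} \<noteq> {}"
      using traces[OF BD(1)] bip_preimage_nonempty[OF BD(1)] PX_D(2)[OF \<beta> BD(1)] by simp
  qed
  also have "\<dots> = (\<lambda>(B,D). (bip_preimage \<alpha> B, D)) ` \<beta>"
    unfolding image_image using traces by (rule image_cong[OF refl])
  finally show ?thesis .
qed

end

lemma star_PX:
  assumes "\<alpha> \<in> PX X" "\<beta> \<in> PX X"
  shows "star X \<alpha> \<beta> \<in> PX X"
proof (rule PX_I)
  fix P Q assume "(P,Q) \<in> star X \<alpha> \<beta>"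
  then show "P \<noteq> {} \<and> Q \<noteq> {} \<and> P \<subseteq> X \<and> Q \<subseteq> X" by (rule star_memE) auto
next
  fix P Q P' Q' assume PQ: "(P,Q) \<in> star X \<alpha> \<beta>" and PQ': "(P',Q') \<in> star X \<alpha> \<beta>"
    and meet: "P \<inter> P' \<noteq> {} \<or> Q \<inter> Q' \<noteq> {}"
  obtain u where u: "P = {x\<in>X. T x \<in> star_class \<alpha> \<beta> u}" "Q = {x\<in>X. Bt x \<in> star_class \<alpha> \<beta> u}"
    using PQ by (rule star_memE) simp
  obtain u' where u': "P' = {x\<in>X. T x \<in> star_class \<alpha> \<beta> u'}" "Q' = {x\<in>X. Bt x \<in> star_class \<alpha> \<beta> u'}"
    using PQ' by (rule star_memE) simp
  obtain w where w: "w \<in> star_class \<alpha> \<beta> u" "w \<in> star_class \<alpha> \<beta> u'"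
    using meet unfolding u u' by blast
  have "star_class \<alpha> \<beta> u = star_class \<alpha> \<beta> u'"
    using star_class_eq[OF w(1)] star_class_eq[OF w(2)] by simp
  then show "P = P' \<and> Q = Q'" unfolding u u' by simp
qed

lemma covered_by_dom_star:
  assumes "\<alpha> \<in> PX X"
  shows "covered_by (dom_of (star X \<alpha> \<beta>)) (dom_of \<alpha>)"
  unfolding covered_by_def
proof (intro ballI)
  fix P x assume "P \<in> dom_of (star X \<alpha> \<beta>)" and x: "x \<in> P"
  then obtain Q where "(P,Q) \<in> star X \<alpha> \<beta>" unfolding dom_of_def by blast
  then obtain u where u: "P = {x\<in>X. T x \<in> star_class \<alpha> \<beta> u}"
      "\<forall>w\<in>star_class \<alpha> \<beta> u. \<not> is_point X \<alpha> \<beta> w"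
    by (rule star_memE) simp
  then have "x \<in> X" "T x \<in> star_class \<alpha> \<beta> u" using x by auto
  then obtain A B where AB: "(A,B) \<in> \<alpha>" "x \<in> A" using u(2) by fastforce
  have "A \<subseteq> P"
  proof
    fix y assume "y \<in> A"
    then have "(T x, T y) \<in> star_edges \<alpha> \<beta>" using star_edgesI1[OF AB(1)] AB(2) by blast
    then have "T y \<in> star_class \<alpha> \<beta> u"
      using \<open>T x \<in> star_class \<alpha> \<beta> u\<close> unfolding star_class_def by (simp add: rtrancl_into_rtrancl)
    then show "y \<in> P" using u(1) PX_D(3)[OF assms AB(1)] \<open>y \<in> A\<close> by blast
  qed
  then show "\<exists>A\<in>dom_of \<alpha>. x \<in> A \<and> A \<subseteq> P" using AB unfolding dom_of_def by blast
qed

(* Reflecting the three levels turns the graph glued from alpha and beta into the one glued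
   from the converses of beta and alpha. *)
fun mirror_lvl :: "'a lvl \<Rightarrow> 'a lvl" where
  "mirror_lvl (T x) = Bt x"
| "mirror_lvl (M x) = M x"
| "mirror_lvl (Bt x) = T x"

lemma mirror_lvl_mirror_lvl [simp]: "mirror_lvl (mirror_lvl u) = u"
  by (cases u) simp_all

lemma mem_mirror_lvl_image: "v \<in> mirror_lvl ` C \<longleftrightarrow> mirror_lvl v \<in> C"
  by (metis image_iff mirror_lvl_mirror_lvl)

lemma mirror_star_edges:
  assumes "(u,v) \<in> star_edges \<alpha> \<beta>"
  shows "(mirror_lvl u, mirror_lvl v) \<in> star_edges (converse_bip \<beta>) (converse_bip \<alpha>)"
  using assms
proof (cases rule: star_edgesE)
  case (1 A B)
  then have "mirror_lvl u \<in> M ` B \<union> Bt ` A" "mirror_lvl v \<in> M ` B \<union> Bt ` A" by auto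
  then show ?thesis using star_edgesI2[of B A "converse_bip \<alpha>"] 1(1) by simp
next
  case (2 B D)
  then have "mirror_lvl u \<in> T ` D \<union> M ` B" "mirror_lvl v \<in> T ` D \<union> M ` B" by auto
  then show ?thesis using star_edgesI1[of D B "converse_bip \<beta>"] 2(1) by simp
qed

lemma mirror_star_class_subset:
  "mirror_lvl ` star_class \<alpha> \<beta> u \<subseteq> star_class (converse_bip \<beta>) (converse_bip \<alpha>) (mirror_lvl u)"
proof
  fix v' assume "v' \<in> mirror_lvl ` star_class \<alpha> \<beta> u"
  then obtain v where v': "v' = mirror_lvl v" and uv: "(u,v) \<in> (star_edges \<alpha> \<beta>)\<^sup>*"
    unfolding star_class_def by blast
  from uv have "(mirror_lvl u, mirror_lvl v) \<in> (star_edges (converse_bip \<beta>) (converse_bip \<alpha>))\<^sup>*"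
    by (induction rule: rtrancl_induct) (auto dest: mirror_star_edges intro: rtrancl_into_rtrancl)
  then show "v' \<in> star_class (converse_bip \<beta>) (converse_bip \<alpha>) (mirror_lvl u)"
    unfolding star_class_def v' by simp
qed

lemma star_class_converse:
  "star_class (converse_bip \<beta>) (converse_bip \<alpha>) (mirror_lvl u) = mirror_lvl ` star_class \<alpha> \<beta> u"
proof
  have "mirror_lvl ` star_class (converse_bip \<beta>) (converse_bip \<alpha>) (mirror_lvl u) \<subseteq> star_class \<alpha> \<beta> u"
    using mirror_star_class_subset[of "converse_bip \<beta>" "converse_bip \<alpha>" "mirror_lvl u"] by simp
  then show "star_class (converse_bip \<beta>) (converse_bip \<alpha>) (mirror_lvl u)
      \<subseteq> mirror_lvl ` star_class \<alpha> \<beta> u"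
    by (auto simp: mem_mirror_lvl_image)
qed (rule mirror_star_class_subset)

lemma is_point_converse:
  "is_point X (converse_bip \<beta>) (converse_bip \<alpha>) (mirror_lvl w) \<longleftrightarrow> is_point X \<alpha> \<beta> w"
  by (cases w) (auto simp: converse_bip_def)

lemma converse_star_subset: "converse_bip (star X \<alpha> \<beta>) \<subseteq> star X (converse_bip \<beta>) (converse_bip \<alpha>)"
proof
  fix p assume "p \<in> converse_bip (star X \<alpha> \<beta>)"
  then obtain q where q: "q \<in> star X \<alpha> \<beta>" "p = prod.swap q" unfolding converse_bip_def by blast
  from q(1) obtain u where u: "u \<in> T ` X \<union> Bt ` X" "\<forall>w\<in>star_class \<alpha> \<beta> u. \<not> is_point X \<alpha> \<beta> w"
    "q = ({x\<in>X. T x \<in> star_class \<alpha> \<beta> u}, {x\<in>X. Bt x \<in> star_class \<alpha> \<beta> u})"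
    "{x\<in>X. T x \<in> star_class \<alpha> \<beta> u} \<noteq> {}" "{x\<in>X. Bt x \<in> star_class \<alpha> \<beta> u} \<noteq> {}"
    by (rule star_memE)
  let ?C = "star_class (converse_bip \<beta>) (converse_bip \<alpha>) (mirror_lvl u)"
  have C: "?C = mirror_lvl ` star_class \<alpha> \<beta> u" by (rule star_class_converse)
  have "({x\<in>X. T x \<in> ?C}, {x\<in>X. Bt x \<in> ?C}) \<in> star X (converse_bip \<beta>) (converse_bip \<alpha>)"
  proof (rule star_memI)
    show "mirror_lvl u \<in> T ` X \<union> Bt ` X" using u(1) by auto
    show "\<forall>w\<in>?C. \<not> is_point X (converse_bip \<beta>) (converse_bip \<alpha>) w"
      using u(2) is_point_converse unfolding C by blast
  qed (use u(4,5) in \<open>simp_all add: C mem_mirror_lvl_image\<close>)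
  then show "p \<in> star X (converse_bip \<beta>) (converse_bip \<alpha>)"
    using q(2) u(3) by (simp add: C mem_mirror_lvl_image)
qed

lemma converse_star: "star X (converse_bip \<beta>) (converse_bip \<alpha>) = converse_bip (star X \<alpha> \<beta>)"
proof
  have "converse_bip (star X (converse_bip \<beta>) (converse_bip \<alpha>)) \<subseteq> star X \<alpha> \<beta>"
    using converse_star_subset[of X "converse_bip \<beta>" "converse_bip \<alpha>"] by simp
  then have "converse_bip (converse_bip (star X (converse_bip \<beta>) (converse_bip \<alpha>)))
      \<subseteq> converse_bip (star X \<alpha> \<beta>)"
    unfolding converse_bip_def by (rule image_mono)
  then show "star X (converse_bip \<beta>) (converse_bip \<alpha>) \<subseteq> converse_bip (star X \<alpha> \<beta>)" by simp
qed (rule converse_star_subset)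

lemma dom_of_image_fst: "dom_of ((\<lambda>(B,D). (f B, D)) ` \<beta>) = f ` dom_of \<beta>"
  unfolding dom_of_def by force

lemma covered_by_bip_preimage: "covered_by (bip_preimage \<alpha> ` \<P>) (dom_of \<alpha>)"
  unfolding covered_by_def dom_of_def bip_preimage_def by blast

lemma bip_preimage_bip_preimage_converse:
  assumes a: "a \<in> PX X" and cov: "covered_by \<P> (dom_of a)" and P: "P \<in> \<P>"
  shows "bip_preimage a (bip_preimage (converse_bip a) P) = P"
proof
  show "bip_preimage a (bip_preimage (converse_bip a) P) \<subseteq> P"
  proof
    fix x assume "x \<in> bip_preimage a (bip_preimage (converse_bip a) P)"
    then obtain A B where AB: "(A,B) \<in> a" "B \<subseteq> bip_preimage (converse_bip a) P" "x \<in> A"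
      unfolding mem_bip_preimage by blast
    obtain y where "y \<in> B" using PX_D(2)[OF a AB(1)] by blast
    then have "y \<in> bip_preimage (converse_bip a) P" using AB(2) by blast
    then obtain A' B' where "(A',B') \<in> a" "A' \<subseteq> P" "y \<in> B'" by (auto simp: mem_bip_preimage)
    then have "A = A'" using PX_eq_if_snd_meet[OF a AB(1)] \<open>y \<in> B\<close> by blast
    then show "x \<in> P" using AB(3) \<open>A' \<subseteq> P\<close> by blast
  qed
  show "P \<subseteq> bip_preimage a (bip_preimage (converse_bip a) P)"
  proof
    fix x assume "x \<in> P"
    then obtain A where "A \<in> dom_of a" "x \<in> A" "A \<subseteq> P" using covered_byE[OF cov P] by blast
    then obtain B where AB: "(A,B) \<in> a" "x \<in> A" "A \<subseteq> P" unfolding dom_of_def by blast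
    then have "B \<subseteq> bip_preimage (converse_bip a) P" unfolding bip_preimage_def by auto
    with AB show "x \<in> bip_preimage a (bip_preimage (converse_bip a) P)"
      unfolding mem_bip_preimage by blast
  qed
qed

lemma star_star_converse:
  assumes a: "a \<in> PX X" and c: "c \<in> PX X" and cov: "covered_by (dom_of c) (dom_of a)"
  shows "star X a (star X (converse_bip a) c) = c"
proof -
  have s: "star X (converse_bip a) c = (\<lambda>(P,Q). (bip_preimage (converse_bip a) P, Q)) ` c"
    by (rule star_of_covered[OF converse_bip_PX[OF a] c]) (simp add: cov)
  have "covered_by (dom_of (star X (converse_bip a) c)) (ran_of a)"
    unfolding s dom_of_image_fst using covered_by_bip_preimage[of "converse_bip a"] by simp
  then have "star X a (star X (converse_bip a) c)
      = (\<lambda>(B,D). (bip_preimage a B, D)) ` star X (converse_bip a) c"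
    by (rule star_of_covered[OF a star_PX[OF converse_bip_PX[OF a] c]])
  also have "\<dots> = (\<lambda>(P,Q). (bip_preimage a (bip_preimage (converse_bip a) P), Q)) ` c"
    unfolding s image_image by (rule image_cong) auto
  also have "\<dots> = (\<lambda>p. p) ` c"
  proof (rule image_cong)
    fix p assume "p \<in> c"
    moreover obtain P Q where "p = (P,Q)" by (cases p)
    ultimately show "(\<lambda>(P,Q). (bip_preimage a (bip_preimage (converse_bip a) P), Q)) p = p"
      using bip_preimage_bip_preimage_converse[OF a cov] unfolding dom_of_def by auto
  qed simp
  finally show ?thesis by simp
qed

lemma bip_product_star: "bip_product X (star X)"
proof
  fix a b assume "a \<in> PX X" "b \<in> PX X"
  then show "star X a b \<in> PX X" by (rule star_PX)
next
  fix a b :: "'a bip"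
  show "star X (converse_bip b) (converse_bip a) = converse_bip (star X a b)" by (rule converse_star)
next
  fix a b assume "a \<in> PX X"
  then show "covered_by (dom_of (star X a b)) (dom_of a)" by (rule covered_by_dom_star)
next
  fix a c assume a: "a \<in> PX X" and c: "c \<in> PX X" and "dom_of c \<subseteq> dom_of a"
  then have "star X a (star X (converse_bip a) c) = c"
    using star_star_converse covered_by_subset by blast
  then show "c \<in> star X a ` PX X" using star_PX[OF converse_bip_PX[OF a] c] by (metis image_eqI)
next
  fix a b t assume a: "a \<in> PX X" and b: "b \<in> PX X" and t: "t \<in> PX X" and "dom_of a = dom_of b"
  then have "covered_by (dom_of (star X b t)) (dom_of a)" using covered_by_dom_star by metis
  then have "star X a (star X (converse_bip a) (star X b t)) = star X b t"
    using star_star_converse[OF a star_PX[OF b t]] by blast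
  then show "star X b t \<in> star X a ` PX X"
    using star_PX[OF converse_bip_PX[OF a] star_PX[OF b t]] by (metis image_eqI)
qed

theorem mainTheorem2:
  fixes X :: "'a set" and mult :: "'a bip \<Rightarrow> 'a bip \<Rightarrow> 'a bip"
  assumes "mult = star X \<or> mult = circ"
  shows "(\<forall>a\<in>PX X. \<forall>b\<in>PX X. greenR (PX X) mult a b \<longleftrightarrow> dom_of a = dom_of b)
       \<and> (\<forall>a\<in>PX X. \<forall>b\<in>PX X. greenL (PX X) mult a b \<longleftrightarrow> ran_of a = ran_of b)
       \<and> (\<forall>a\<in>PX X. \<forall>b\<in>PX X.
            (greenD (PX X) mult a b \<longleftrightarrow> greenJ (PX X) mult a b)
          \<and> (greenJ (PX X) mult a b \<longleftrightarrow> (rank_of a, rank_of b) \<in> ordIso))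
       \<and> (\<forall>I. is_ideal (PX X) mult I \<longrightarrow>
            (\<exists>\<xi> :: 'a set rel. Card_order \<xi> \<and> (\<xi>, cardSuc (card_of X)) \<in> ordLeq \<and>
               I = {\<alpha>\<in>PX X. (rank_of \<alpha>, \<xi>) \<in> ordLess}))"
proof -
  interpret bip_product X mult
    using assms bip_product_star bip_product_circ by blast
  show ?thesis
    unfolding rank_of_def
    using greenR_iff_dom_eq greenL_iff_ran_eq greenD_iff_card_eq greenJ_iff_card_eq ideal_eq_card_less
    by simp
qed

end
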